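(* Let $N\ge 4$ and define the holomorphic map $\Phi_N\colon \mathbb{C}^N\to \mathrm{SL}_2(\mathbb{C})$ by $$\Phi_N(z_1,\dots,z_N)=M_1(z_1)M_2(z_2)\cdots M_N(z_N),$$ where for $t\in\mathbb{C}$ we set $M_j(t)=\begin{pmatrix}1&0\\ t&1\end{pmatrix}$ if $j$ is odd and $M_j(t)=\begin{pmatrix}1&t\\ 0&1\end{pmatrix}$ if $j$ is even. Then $\Phi_N$ is a submersion at a point $z\in\mathbb{C}^N$ if and only if $z\notin\{(z_1,0,\dots,0,z_N): z_1,z_N\in\mathbb{C}\}$, i.e. if and only if $z_i\neq 0$ for some $2\le i\le N-1$. *)

theory Defs
  imports "HOL-Analysis.Analysis"
begin

text \<open>Coordinates of \<open>\<complex>^N\<close> are indexed by a finite linearly ordered type \<open>'n\<close>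
  with \<open>N = CARD('n)\<close>; \<open>idx i\<close> is the 0-based position of \<open>i\<close>
  (so the paper's index \<open>j\<close> of \<open>i\<close> is \<open>idx i + 1\<close>).\<close>

definition idx :: "'n::{finite,linorder} \<Rightarrow> nat" where
  "idx i = card {j. j < i}"

definition Mmat :: "nat \<Rightarrow> complex \<Rightarrow> complex^2^2" where
  "Mmat j t = (if odd j then vector [vector [1, 0], vector [t, 1]]
                        else vector [vector [1, t], vector [0, 1]])"

definition Phi :: "complex^'n::{finite,linorder} \<Rightarrow> complex^2^2" where
  "Phi z = foldr (\<lambda>i A. Mmat (idx i + 1) (z $ i) ** A) (sorted_list_of_set UNIV) (mat 1)"

definition SL2_tangent :: "complex^2^2 \<Rightarrow> (complex^2^2) set" where
  "SL2_tangent A = {A ** Y | Y. trace Y = 0}"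

definition submersion_SL2_at :: "('a::real_normed_vector \<Rightarrow> complex^2^2) \<Rightarrow> 'a \<Rightarrow> bool" where
  "submersion_SL2_at f z \<longleftrightarrow>
     (\<exists>D. (f has_derivative D) (at z) \<and> range D = SL2_tangent (f z))"

end

theory Submission
  imports Defs
begin

text \<open>Write \<open>M\<^sub>q = 1 + E\<^sub>q\<close> with \<open>E\<^sub>q\<close> nilpotent, and \<open>R\<^sub>q = M\<^sub>q\<^sub>+\<^sub>1 \<cdots> M\<^sub>N\<close>. Since
  \<open>M\<^sub>q E\<^sub>q = E\<^sub>q\<close>, the differential of \<open>\<Phi>\<^sub>N\<close> left-translated to the identity sends \<open>h\<close> to
  \<open>\<Sum>\<^sub>q R\<^sub>q\<inverse> E\<^sub>q(h\<^sub>q) R\<^sub>q\<close>, a subspace of \<open>sl\<^sub>2\<close>. Let \<open>L = M\<^sub>N(z\<^sub>N)\<close>. If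
  \<open>z\<^sub>2 = \<dots> = z\<^sub>N\<^sub>-\<^sub>1 = 0\<close>, every \<open>R\<^sub>q\<close> may be replaced by \<open>L\<close>, so the image is
  \<open>L\<inverse> V L\<close> with \<open>V\<close> the matrices of zero diagonal, a proper subspace. Otherwise let \<open>k\<close> be
  the last interior index with \<open>z\<^sub>k \<noteq> 0\<close>; then coordinates \<open>k-1, k, k+1\<close> alone give
  \<open>L\<inverse> (M\<^sub>k\<inverse> E\<^sub>k\<^sub>-\<^sub>1 M\<^sub>k + E\<^sub>k + E\<^sub>k\<^sub>+\<^sub>1) L\<close>, and for \<open>z\<^sub>k \<noteq> 0\<close> these three
  directions span \<open>sl\<^sub>2\<close>.\<close>

definition adj2 :: "'a::comm_ring_1^2^2 \<Rightarrow> 'a^2^2" where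
  "adj2 A = vector [vector [A$2$2, - A$1$2], vector [- A$2$1, A$1$1]]"

definition Nmat :: "nat \<Rightarrow> complex \<Rightarrow> complex^2^2" where
  "Nmat j t = (if odd j then vector [vector [0, 0], vector [t, 0]]
                        else vector [vector [0, t], vector [0, 0]])"

lemmas matrix2_simps =
  vec_eq_iff forall_2 matrix_matrix_mult_def sum_2 mat_def adj2_def Nmat_def Mmat_def

lemma adj2_right_inverse: "det A = 1 \<Longrightarrow> A ** adj2 A = mat 1"
  by (auto simp: matrix2_simps det_2 algebra_simps)

lemma adj2_left_inverse: "det A = 1 \<Longrightarrow> adj2 A ** A = mat 1"
  by (auto simp: matrix2_simps det_2 algebra_simps)

lemma adj2_mult: "adj2 (A ** B) = adj2 B ** adj2 A"
  by (simp add: matrix2_simps algebra_simps)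

lemma adj2_adj2: "adj2 (adj2 A) = A"
  by (simp add: matrix2_simps)

lemma det_adj2: "det (adj2 A) = det A"
  by (simp add: matrix2_simps det_2)

lemma adj2_mat_1 [simp]: "adj2 (mat 1) = mat 1"
  by (simp add: matrix2_simps)

lemma matrix_mult_left_cancel:
  fixes A X Y :: "'a::comm_ring_1^2^2"
  assumes "det A = 1" "A ** X = A ** Y"
  shows "X = Y"
proof -
  from assms(2) have "(adj2 A ** A) ** X = (adj2 A ** A) ** Y"
    by (simp flip: matrix_mul_assoc)
  then show ?thesis
    by (simp add: adj2_left_inverse assms(1))
qed

lemma adj2_conj_cancel:
  assumes "det A = 1"
  shows "A ** (adj2 A ** X ** A) ** adj2 A = X"
proof -
  have "A ** (adj2 A ** X ** A) ** adj2 A = (A ** adj2 A) ** X ** (A ** adj2 A)"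
    by (simp add: matrix_mul_assoc)
  then show ?thesis
    by (simp add: adj2_right_inverse assms)
qed

lemma adj2_conj_inject:
  assumes "det A = 1"
  shows "adj2 A ** X ** A = adj2 A ** Y ** A \<longleftrightarrow> X = Y"
  by (metis adj2_conj_cancel assms)

lemma trace_conj_adj2:
  assumes "det A = 1"
  shows "trace (adj2 A ** X ** A) = trace X"
proof -
  have "trace (adj2 A ** X ** A) = trace (A ** (adj2 A ** X))"
    by (rule trace_mul_sym)
  also have "\<dots> = trace X"
    by (simp add: matrix_mul_assoc adj2_right_inverse assms)
  finally show ?thesis .
qed

lemma trace_sum: "trace (sum f S) = (\<Sum>x\<in>S. trace (f x))"
  by (simp add: trace_def sum.swap[of _ UNIV S])

lemma det_Mmat [simp]: "det (Mmat j t) = 1"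
  by (simp add: matrix2_simps det_2)

lemma Mmat_0 [simp]: "Mmat j 0 = mat 1"
  by (simp add: matrix2_simps)

lemma Mmat_eq_mat_1_plus_Nmat: "Mmat j t = mat 1 + Nmat j t"
  by (simp add: matrix2_simps)

lemma Mmat_mult_Nmat [simp]: "Mmat j t ** Nmat j c = Nmat j c"
  by (simp add: matrix2_simps)

lemma Nmat_conj_Mmat: "adj2 (Mmat j t) ** Nmat j c ** Mmat j t = Nmat j c"
  by (simp add: matrix2_simps algebra_simps)

lemma Nmat_0 [simp]: "Nmat j 0 = 0"
  by (simp add: matrix2_simps)

lemma Nmat_diag: "Nmat j c $ 1 $ 1 = 0"
  by (simp add: matrix2_simps)

lemma trace_Nmat [simp]: "trace (Nmat j c) = 0"
  by (simp add: matrix2_simps trace_def)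

lemma bounded_linear_Nmat_component: "bounded_linear (\<lambda>h::complex^'n. Nmat j (h $ i))"
proof -
  have "linear (\<lambda>h::complex^'n. Nmat j (h $ i))"
    unfolding linear_iff by (auto simp: matrix2_simps)
  then show ?thesis
    by (simp add: linear_conv_bounded_linear)
qed

interpretation matrix2_mult: bounded_bilinear "\<lambda>A B :: complex^2^2. A ** B"
proof -
  have "bilinear (\<lambda>A B :: complex^2^2. A ** B)"
    unfolding bilinear_def linear_iff by (auto simp: matrix2_simps algebra_simps)
  then show "bounded_bilinear (\<lambda>A B :: complex^2^2. A ** B)"
    by (simp add: bilinear_conv_bounded_bilinear)
qed

lemma traceless_decomposition:
  assumes "t \<noteq> 0" "trace Y = 0"
  shows "\<exists>a b c. adj2 (Mmat (Suc j) t) ** Nmat j a ** Mmat (Suc j) t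
                  + Nmat (Suc j) b + Nmat (Suc (Suc j)) c = Y"
proof -
  have Y22: "Y$2$2 = - Y$1$1"
    using assms(2) by (simp add: trace_def sum_2 add_eq_0_iff)
  show ?thesis
  proof (cases "odd j")
    case True
    let ?a = "- Y$1$1 / t"
    show ?thesis
      by (rule exI[of _ ?a], rule exI[of _ "Y$1$2 + t^2 * ?a"], rule exI[of _ "Y$2$1 - ?a"])
        (use True assms(1) Y22 in \<open>auto simp: matrix2_simps field_simps power2_eq_square\<close>)
  next
    case False
    let ?a = "Y$1$1 / t"
    show ?thesis
      by (rule exI[of _ ?a], rule exI[of _ "Y$2$1 + t^2 * ?a"], rule exI[of _ "Y$1$2 - ?a"])
        (use False assms(1) Y22 in \<open>auto simp: matrix2_simps field_simps power2_eq_square\<close>)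
  qed
qed

text \<open>Positions are 0-based: position \<open>p\<close> carries the factor \<open>M\<^sub>p\<^sub>+\<^sub>1\<close>, so the interior
  indices \<open>2, \<dots>, N-1\<close> are the positions \<open>1, \<dots>, N-2\<close>.\<close>

definition Mprod :: "(nat \<Rightarrow> complex) \<Rightarrow> nat list \<Rightarrow> complex^2^2" where
  "Mprod w ps = foldr (\<lambda>p A. Mmat (Suc p) (w p) ** A) ps (mat 1)"

lemma Mprod_Nil [simp]: "Mprod w [] = mat 1"
  by (simp add: Mprod_def)

lemma Mprod_Cons [simp]: "Mprod w (p # ps) = Mmat (Suc p) (w p) ** Mprod w ps"
  by (simp add: Mprod_def)

lemma Mprod_append: "Mprod w (ps @ qs) = Mprod w ps ** Mprod w qs"
  by (induction ps) (auto simp: matrix_mul_assoc)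

lemma det_Mprod [simp]: "det (Mprod w ps) = 1"
  by (induction ps) (auto simp: det_mul)

lemma Mprod_vanishing: "(\<And>p. p \<in> set ps \<Longrightarrow> w p = 0) \<Longrightarrow> Mprod w ps = mat 1"
  by (induction ps) auto

lemma Mprod_upt_vanishing_but_last:
  assumes "m < n" "\<And>p. m \<le> p \<Longrightarrow> p < n - 1 \<Longrightarrow> w p = 0"
  shows "Mprod w [m..<n] = Mmat n (w (n - 1))"
proof -
  have "[m..<n] = [m..<n - 1] @ [n - 1]"
    using assms(1) upt_Suc_append[of m "n - 1"] by simp
  moreover have "Mprod w [m..<n - 1] = mat 1"
    using assms(2) by (intro Mprod_vanishing) auto
  ultimately show ?thesis
    using assms(1) by (simp add: Mprod_append)
qed

primrec Mprod_diff :: "(nat \<Rightarrow> complex) \<Rightarrow> (nat \<Rightarrow> complex) \<Rightarrow> nat list \<Rightarrow> complex^2^2" where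
  "Mprod_diff w v [] = 0"
| "Mprod_diff w v (p # ps) = Nmat (Suc p) (v p) ** Mprod w ps + Mmat (Suc p) (w p) ** Mprod_diff w v ps"

lemma has_derivative_Mprod:
  "((\<lambda>z. Mprod (\<lambda>p. z $ f p) ps) has_derivative (\<lambda>h. Mprod_diff (\<lambda>p. z $ f p) (\<lambda>p. h $ f p) ps)) (at z)"
proof (induction ps)
  case Nil
  then show ?case by simp
next
  case (Cons p ps)
  have "((\<lambda>z. mat 1 + Nmat (Suc p) (z $ f p)) has_derivative (\<lambda>h. 0 + Nmat (Suc p) (h $ f p))) (at z)"
    by (intro has_derivative_add has_derivative_const bounded_linear_imp_has_derivative
        bounded_linear_Nmat_component)
  then have "((\<lambda>z. Mmat (Suc p) (z $ f p)) has_derivative (\<lambda>h. Nmat (Suc p) (h $ f p))) (at z)"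
    by (simp add: Mmat_eq_mat_1_plus_Nmat)
  from matrix2_mult.FDERIV[OF this Cons.IH] show ?case
    by (simp add: add.commute)
qed

lemma Mprod_diff_left_translate:
  "Mprod_diff w v ps = Mprod w ps **
     (\<Sum>k<length ps. adj2 (Mprod w (drop (Suc k) ps)) ** Nmat (Suc (ps!k)) (v (ps!k))
                       ** Mprod w (drop (Suc k) ps))"
proof (induction ps)
  case Nil
  then show ?case by simp
next
  case (Cons p ps)
  let ?M = "Mmat (Suc p) (w p)" and ?N = "Nmat (Suc p) (v p)" and ?R = "Mprod w ps"
  have "?M ** ?R ** (adj2 ?R ** ?N ** ?R) = ?M ** (?R ** adj2 ?R) ** ?N ** ?R"
    by (simp add: matrix_mul_assoc)
  also have "\<dots> = ?N ** ?R"
    by (simp add: adj2_right_inverse)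
  finally show ?case
    by (simp add: Cons.IH sum.lessThan_Suc_shift matrix_add_ldistrib matrix_mul_assoc
        del: sum.lessThan_Suc)
qed

definition log_diff_term :: "(nat \<Rightarrow> complex) \<Rightarrow> nat \<Rightarrow> nat \<Rightarrow> complex \<Rightarrow> complex^2^2" where
  "log_diff_term w n q c =
     adj2 (Mprod w [Suc q..<n]) ** Nmat (Suc q) c ** Mprod w [Suc q..<n]"

lemma log_diff_term_0 [simp]: "log_diff_term w n q 0 = 0"
  by (simp add: log_diff_term_def)

definition log_diff :: "(nat \<Rightarrow> complex) \<Rightarrow> nat \<Rightarrow> (nat \<Rightarrow> complex) \<Rightarrow> complex^2^2" where
  "log_diff w n v = (\<Sum>q<n. log_diff_term w n q (v q))"

lemma Mprod_diff_upt: "Mprod_diff w v [0..<n] = Mprod w [0..<n] ** log_diff w n v"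
  unfolding Mprod_diff_left_translate log_diff_def log_diff_term_def
  by (intro arg_cong2[where f = "(**)"] sum.cong) auto

lemma log_diff_cong: "(\<And>q. q < n \<Longrightarrow> v q = v' q) \<Longrightarrow> log_diff w n v = log_diff w n v'"
  unfolding log_diff_def by simp

lemma trace_log_diff: "trace (log_diff w n v) = 0"
  by (simp add: log_diff_def log_diff_term_def trace_conj_adj2 trace_sum)

lemma log_diff_term_tail:
  assumes "q < n" "\<And>p. q < p \<Longrightarrow> p < n - 1 \<Longrightarrow> w p = 0"
  shows "log_diff_term w n q c =
           adj2 (Mmat n (w (n - 1))) ** Nmat (Suc q) c ** Mmat n (w (n - 1))"
proof (cases "Suc q < n")
  case True
  with assms show ?thesis
    by (simp add: log_diff_term_def Mprod_upt_vanishing_but_last)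
next
  case False
  with assms(1) have "n = Suc q" by simp
  then show ?thesis
    by (simp add: log_diff_term_def Nmat_conj_Mmat)
qed

lemma log_diff_not_surj:
  assumes "\<And>p. 0 < p \<Longrightarrow> p < n - 1 \<Longrightarrow> w p = 0"
  shows "\<exists>Y. trace Y = 0 \<and> (\<forall>v. log_diff w n v \<noteq> Y)"
proof -
  let ?L = "Mmat n (w (n - 1))"
  define D :: "complex^2^2" where "D = vector [vector [1, 0], vector [0, -1]]"
  have log_diff_eq: "log_diff w n v = adj2 ?L ** (\<Sum>q<n. Nmat (Suc q) (v q)) ** ?L" for v
    unfolding log_diff_def matrix2_mult.sum_left matrix2_mult.sum_right
    using assms by (intro sum.cong refl log_diff_term_tail) auto
  have "log_diff w n v \<noteq> adj2 ?L ** D ** ?L" for v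
  proof
    assume "log_diff w n v = adj2 ?L ** D ** ?L"
    then have "(\<Sum>q<n. Nmat (Suc q) (v q)) = D"
      by (simp add: log_diff_eq adj2_conj_inject)
    then have "(\<Sum>q<n. Nmat (Suc q) (v q) $ 1 $ 1) = 1"
      by (simp add: D_def flip: sum_component)
    then show False
      by (simp add: Nmat_diag)
  qed
  moreover have "trace (adj2 ?L ** D ** ?L) = 0"
    by (simp add: trace_conj_adj2 D_def matrix2_simps trace_def)
  ultimately show ?thesis
    by blast
qed

lemma log_diff_surj:
  assumes k: "0 < k" "Suc k < n" "w k \<noteq> 0"
    and last: "\<And>p. k < p \<Longrightarrow> p < n - 1 \<Longrightarrow> w p = 0"
    and "trace Y = 0"
  shows "\<exists>v. log_diff w n v = Y"
proof -
  let ?L = "Mmat n (w (n - 1))" and ?M = "Mmat (Suc k) (w k)"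
  define Y' where "Y' = ?L ** Y ** adj2 ?L"
  have Y: "Y = adj2 ?L ** Y' ** ?L"
    using adj2_conj_cancel[of "adj2 ?L" Y] by (simp add: Y'_def adj2_adj2 det_adj2)
  have "trace Y' = 0"
    using trace_conj_adj2[of "adj2 ?L" Y] \<open>trace Y = 0\<close> by (simp add: Y'_def adj2_adj2 det_adj2)
  with k(3) obtain a b c where abc:
    "adj2 ?M ** Nmat k a ** ?M + Nmat (Suc k) b + Nmat (Suc (Suc k)) c = Y'"
    using traceless_decomposition by blast
  have "[k..<n] = k # [Suc k..<n]"
    using k by (simp add: upt_conv_Cons)
  then have "Mprod w [k..<n] = ?M ** ?L"
    using k last by (simp add: Mprod_upt_vanishing_but_last)
  then have term_before: "log_diff_term w n (k - 1) a = adj2 ?L ** (adj2 ?M ** Nmat k a ** ?M) ** ?L"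
    using k(1) by (simp add: log_diff_term_def adj2_mult matrix_mul_assoc)
  have term_at: "log_diff_term w n k b = adj2 ?L ** Nmat (Suc k) b ** ?L"
    using k last by (simp add: log_diff_term_tail)
  have term_after: "log_diff_term w n (Suc k) c = adj2 ?L ** Nmat (Suc (Suc k)) c ** ?L"
    using k last by (simp add: log_diff_term_tail)
  define v where "v q = (if q = k - 1 then a else if q = k then b else if q = Suc k then c else 0)" for q
  have "log_diff w n v = (\<Sum>q\<in>{k - 1, k, Suc k}. log_diff_term w n q (v q))"
    unfolding log_diff_def using k by (intro sum.mono_neutral_right) (auto simp: v_def)
  also have "\<dots> = log_diff_term w n (k - 1) a + log_diff_term w n k b + log_diff_term w n (Suc k) c"
    using k(1) by (auto simp: v_def add.assoc sum.insert_if)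
  also have "\<dots> = Y"
    unfolding term_before term_at term_after Y abc[symmetric]
    by (simp add: matrix2_mult.add_left matrix2_mult.add_right)
  finally show ?thesis
    by blast
qed

lemma log_diff_surj_iff:
  "(\<forall>Y. trace Y = 0 \<longrightarrow> (\<exists>v. log_diff w n v = Y)) \<longleftrightarrow> (\<exists>k. 0 < k \<and> Suc k < n \<and> w k \<noteq> 0)"
proof
  assume surj: "\<forall>Y. trace Y = 0 \<longrightarrow> (\<exists>v. log_diff w n v = Y)"
  show "\<exists>k. 0 < k \<and> Suc k < n \<and> w k \<noteq> 0"
  proof (rule ccontr)
    assume "\<not> ?thesis"
    then have "\<And>p. 0 < p \<Longrightarrow> p < n - 1 \<Longrightarrow> w p = 0"
      by (auto simp: less_diff_conv)
    with surj show False
      using log_diff_not_surj by blast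
  qed
next
  assume "\<exists>k. 0 < k \<and> Suc k < n \<and> w k \<noteq> 0"
  then have nonempty: "{k. 0 < k \<and> Suc k < n \<and> w k \<noteq> 0} \<noteq> {}"
    by blast
  have fin: "finite {k. 0 < k \<and> Suc k < n \<and> w k \<noteq> 0}"
    by (rule finite_subset[of _ "{..<n}"]) auto
  define k where "k = Max {k. 0 < k \<and> Suc k < n \<and> w k \<noteq> 0}"
  have k: "0 < k" "Suc k < n" "w k \<noteq> 0"
    using Max_in[OF fin nonempty] by (simp_all add: k_def)
  have "w p = 0" if "k < p" "p < n - 1" for p
    using Max_ge[OF fin, of p] that k(1) by (fastforce simp: k_def)
  with k show "\<forall>Y. trace Y = 0 \<longrightarrow> (\<exists>v. log_diff w n v = Y)"
    using log_diff_surj by blast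
qed

definition pos :: "nat \<Rightarrow> 'n::{finite,linorder}" where
  "pos p = sorted_list_of_set UNIV ! p"

lemma idx_pos:
  assumes "p < CARD('n)"
  shows "idx (pos p :: 'n::{finite,linorder}) = p"
proof -
  define xs where "xs = sorted_list_of_set (UNIV :: 'n set)"
  have xs: "sorted_wrt (<) xs" "distinct xs" "set xs = UNIV" "length xs = CARD('n)"
    by (simp_all add: xs_def)
  have less_iff: "xs ! q < xs ! p \<longleftrightarrow> q < p" if "q < CARD('n)" for q
    using that assms xs
    by (metis leD linorder_le_less_linear sorted_nth_mono sorted_wrt_nth_less strict_sorted_imp_sorted)
  have "{j. j < xs ! p} = set (take p xs)"
  proof (intro set_eqI iffI)
    fix j
    assume "j \<in> {j. j < xs ! p}"
    moreover obtain q where "q < CARD('n)" "j = xs ! q"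
      using xs by (metis UNIV_I in_set_conv_nth)
    ultimately show "j \<in> set (take p xs)"
      using less_iff xs(4) assms by (auto simp: in_set_conv_nth)
  next
    fix j
    assume "j \<in> set (take p xs)"
    then show "j \<in> {j. j < xs ! p}"
      using less_iff xs(4) assms by (auto simp: in_set_conv_nth)
  qed
  then show ?thesis
    using xs assms by (simp add: idx_def pos_def xs_def[symmetric] distinct_card)
qed

lemma pos_idx: "pos (idx i) = (i :: 'n::{finite,linorder})"
proof -
  have "i \<in> set (sorted_list_of_set (UNIV :: 'n set))"
    by simp
  then obtain p where p: "p < length (sorted_list_of_set (UNIV :: 'n set))" "pos p = i"
    unfolding in_set_conv_nth pos_def by blast
  then have "idx (pos p :: 'n) = p"
    by (intro idx_pos) simp
  with p(2) show ?thesis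
    by simp
qed

lemma interior_index_iff:
  "(\<exists>i :: 'n::{finite,linorder}. 2 \<le> idx i + 1 \<and> idx i + 1 \<le> CARD('n) - 1 \<and> P i) \<longleftrightarrow>
   (\<exists>k. 0 < k \<and> Suc k < CARD('n) \<and> P (pos k))"
proof
  assume "\<exists>i :: 'n. 2 \<le> idx i + 1 \<and> idx i + 1 \<le> CARD('n) - 1 \<and> P i"
  then obtain i :: 'n where "2 \<le> idx i + 1" "idx i + 1 \<le> CARD('n) - 1" "P i"
    by blast
  then show "\<exists>k. 0 < k \<and> Suc k < CARD('n) \<and> P (pos k)"
    by (intro exI[of _ "idx i"]) (auto simp: pos_idx)
next
  assume "\<exists>k. 0 < k \<and> Suc k < CARD('n) \<and> P (pos k)"
  then obtain k where "0 < k" "Suc k < CARD('n)" "P (pos k)"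
    by blast
  then show "\<exists>i :: 'n. 2 \<le> idx i + 1 \<and> idx i + 1 \<le> CARD('n) - 1 \<and> P i"
    by (intro exI[of _ "pos k"]) (auto simp: idx_pos)
qed

lemma Phi_eq_Mprod: "Phi (z :: complex^'n::{finite,linorder}) = Mprod (\<lambda>p. z $ pos p) [0..<CARD('n)]"
proof -
  have "sorted_list_of_set (UNIV :: 'n set) = map pos [0..<CARD('n)]"
    unfolding pos_def[abs_def] by (metis length_sorted_list_of_set map_nth)
  then have "Phi z = foldr (\<lambda>p A. Mmat (Suc (idx (pos p :: 'n))) (z $ pos p) ** A) [0..<CARD('n)] (mat 1)"
    by (simp add: Phi_def foldr_map o_def)
  also have "\<dots> = Mprod (\<lambda>p. z $ pos p) [0..<CARD('n)]"
    unfolding Mprod_def by (intro foldr_cong) (auto simp: idx_pos)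
  finally show ?thesis .
qed

lemma submersion_Phi_iff:
  fixes z :: "complex^'n::{finite,linorder}"
  shows "submersion_SL2_at Phi z \<longleftrightarrow>
           (\<forall>Y. trace Y = 0 \<longrightarrow> (\<exists>v. log_diff (\<lambda>p. z $ pos p) CARD('n) v = Y))"
proof -
  let ?w = "\<lambda>p. z $ pos p" and ?n = "CARD('n)"
  define D where "D h = Phi z ** log_diff ?w ?n (\<lambda>p. h $ (pos p :: 'n))" for h
  have "(Phi has_derivative D) (at z)"
    using has_derivative_Mprod[of pos "[0..<?n]" z]
    by (simp add: Phi_eq_Mprod[abs_def] D_def[abs_def] Mprod_diff_upt)
  moreover have "range D \<subseteq> SL2_tangent (Phi z)"
    by (auto simp: SL2_tangent_def D_def trace_log_diff)
  ultimately have "submersion_SL2_at Phi z \<longleftrightarrow> SL2_tangent (Phi z) \<subseteq> range D"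
    unfolding submersion_SL2_at_def by (metis has_derivative_unique subset_antisym)
  also have "\<dots> \<longleftrightarrow> (\<forall>Y. trace Y = 0 \<longrightarrow> (\<exists>h. log_diff ?w ?n (\<lambda>p. h $ (pos p :: 'n)) = Y))"
  proof -
    have cancel: "Phi z ** X = Phi z ** Y \<longleftrightarrow> X = Y" for X Y :: "complex^2^2"
      using matrix_mult_left_cancel[of "Phi z"] by (auto simp: Phi_eq_Mprod)
    have "Phi z ** Y \<in> range D \<longleftrightarrow> (\<exists>h. log_diff ?w ?n (\<lambda>p. h $ (pos p :: 'n)) = Y)" for Y
      unfolding D_def by (auto simp: cancel image_iff eq_commute)
    then show ?thesis
      unfolding SL2_tangent_def by blast
  qed
  also have "\<dots> \<longleftrightarrow> (\<forall>Y. trace Y = 0 \<longrightarrow> (\<exists>v. log_diff ?w ?n v = Y))"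
  proof -
    have "log_diff ?w ?n (\<lambda>p. (\<chi> i. v (idx i)) $ (pos p :: 'n)) = log_diff ?w ?n v" for v
      by (intro log_diff_cong) (simp add: idx_pos)
    then show ?thesis
      by blast
  qed
  finally show ?thesis .
qed

text \<open>The equivalence holds for every \<open>N\<close>.\<close>

theorem lemma1:
  fixes z :: "complex^'n::{finite,linorder}"
  assumes "CARD('n) \<ge> 4"
  shows "submersion_SL2_at Phi z \<longleftrightarrow>
           (\<exists>i. 2 \<le> idx i + 1 \<and> idx i + 1 \<le> CARD('n) - 1 \<and> z $ i \<noteq> 0)"
  by (subst interior_index_iff) (simp add: submersion_Phi_iff log_diff_surj_iff)

end
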